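(* Let $p=(p_1,p_2,p_3)$, $q=(q_1,q_2,q_3)\in\mathbb Z^3$ with $\sum p_i=\sum q_i$, $p_1\le p_2\le p_3$, $q_1\le q_2\le q_3$, such that the $S^1_{p,q}$-action on $SU(3)$ is free and $q_2=p_1$ or $q_2=p_3$. Then, up to diffeomorphism of the quotient, the action is one of: (1) $p=(0,0,0)$, $q=(-1,0,1)$; (2) $p=(0,1,1)$, $q=(0,0,2)$.
   Context: $S^1_{p,q}$ acts on $SU(3)$ by $z\star A=\mathrm{diag}(z^{p_1},z^{p_2},z^{p_3})A\,\mathrm{diag}(\bar z^{q_1},\bar z^{q_2},\bar z^{q_3})$; it is free iff $\gcd(p_1-q_{\sigma(1)},p_2-q_{\sigma(2)})=1$ for all $\sigma\in S_3$. Quotients are considered up to the diffeomorphisms induced by permuting the $p_i$, permuting the $q_i$, swapping $p$ and $q$, adding a common integer to all $p_i,q_j$, and replacing $(p,q)$ by $((-p_3,-p_2,-p_1),(-q_3,-q_2,-q_1))$. *)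

theory Defs
  imports "HOL-Analysis.Analysis"
begin

text \<open>Freeness of the circle action z * A = diag(z^p) A diag(conj z^q) on SU(3),
  via the gcd criterion stated in the paper.\<close>
definition free_action :: "int ^ 3 \<Rightarrow> int ^ 3 \<Rightarrow> bool" where
  "free_action p q \<longleftrightarrow>
     (\<forall>\<sigma>. \<sigma> permutes (UNIV :: 3 set) \<longrightarrow>
        gcd (p $ 1 - q $ (\<sigma> 1)) (p $ 2 - q $ (\<sigma> 2)) = 1)"

text \<open>Elementary moves inducing diffeomorphisms of the quotients.\<close>
definition quot_move :: "((int ^ 3) \<times> (int ^ 3)) \<Rightarrow> ((int ^ 3) \<times> (int ^ 3)) \<Rightarrow> bool" where
  "quot_move a b \<longleftrightarrow>
     (let p = fst a; q = snd a; p' = fst b; q' = snd b in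
       (\<exists>\<sigma>. \<sigma> permutes (UNIV :: 3 set) \<and> p' = (\<chi> i. p $ \<sigma> i) \<and> q' = q) \<or>
       (\<exists>\<sigma>. \<sigma> permutes (UNIV :: 3 set) \<and> p' = p \<and> q' = (\<chi> i. q $ \<sigma> i)) \<or>
       (p' = q \<and> q' = p) \<or>
       (\<exists>k::int. p' = (\<chi> i. p $ i + k) \<and> q' = (\<chi> i. q $ i + k)) \<or>
       (p' = vector [- p $ 3, - p $ 2, - p $ 1] \<and> q' = vector [- q $ 3, - q $ 2, - q $ 1]))"

definition quot_equiv :: "((int ^ 3) \<times> (int ^ 3)) \<Rightarrow> ((int ^ 3) \<times> (int ^ 3)) \<Rightarrow> bool" where
  "quot_equiv = equivclp quot_move"

end

theory Submission
  imports Defs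
begin

text \<open>Freeness forces gcd(p1 - q_i, p2 - q_j) = 1 for every pair of
  distinct indices i, j, since any such pair extends to a permutation of {1,2,3}.
  If q2 = p1, the pairs (2,1) and (2,3) give |p2 - q1| = |p2 - q3| = 1 (a gcd with
  0 is an absolute value); together with the orderings and the equal sums this
  leaves exactly two parameter pairs up to a common shift.  If q2 = p3, the sum
  condition turns the pairs (1,3) and (3,1) into gcd(x, -x) = 1, which gives
  |p1 - q1| = |p1 - q3| = 1 and again two shapes up to a common shift.  Of the
  four resulting shapes, three are shifts of the two normal forms; the fourth
  becomes the second normal form after the reversal move.\<close>

text \<open>Any two distinct images of two distinct points are realised by a permutation:
  move a to i, then move the new image of b to j without disturbing i.\<close>
lemma permutation_extending_pair:
  fixes a b i j :: 'a
  assumes "a \<noteq> b" and "i \<noteq> j"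
  shows "\<exists>\<sigma>. \<sigma> permutes (UNIV :: 'a set) \<and> \<sigma> a = i \<and> \<sigma> b = j"
proof -
  define k where "k = Transposition.transpose a i b"
  have "k \<noteq> i"
    using assms(1) unfolding k_def by (auto simp: Transposition.transpose_def)
  define \<sigma> where "\<sigma> = Transposition.transpose k j \<circ> Transposition.transpose a i"
  have "\<sigma> permutes UNIV"
    unfolding \<sigma>_def by (intro permutes_compose permutes_swap_id) auto
  moreover have "\<sigma> a = i" and "\<sigma> b = j"
    using \<open>k \<noteq> i\<close> assms(2) unfolding \<sigma>_def k_def by (auto simp: Transposition.transpose_def)
  ultimately show ?thesis by blast
qed

lemma free_action_gcd:
  assumes "free_action p q" and "i \<noteq> j"
  shows "gcd (p $ 1 - q $ i) (p $ 2 - q $ j) = 1"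
proof -
  obtain \<sigma> where "\<sigma> permutes (UNIV :: 3 set)" "\<sigma> 1 = i" "\<sigma> 2 = j"
    using permutation_extending_pair[of 1 2 i j] assms(2) by auto
  then show ?thesis
    using assms(1) unfolding free_action_def by metis
qed

lemma vector_3_eta: "(v :: 'a::zero ^ 3) = vector [v $ 1, v $ 2, v $ 3]"
  by (simp add: vec_eq_iff forall_3)

lemma quot_equiv_shift:
  fixes a b c d e f k :: int
  shows "quot_equiv (vector [a, b, c], vector [d, e, f])
                    (vector [a + k, b + k, c + k], vector [d + k, e + k, f + k])"
proof -
  have "quot_move (vector [a, b, c], vector [d, e, f])
                  (vector [a + k, b + k, c + k], vector [d + k, e + k, f + k])"
    unfolding quot_move_def Let_def by (auto simp: vec_eq_iff forall_3)
  then show ?thesis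
    unfolding quot_equiv_def by (rule r_into_equivclp)
qed

lemma quot_equiv_reverse:
  fixes a b c d e f :: int
  shows "quot_equiv (vector [a, b, c], vector [d, e, f])
                    (vector [- c, - b, - a], vector [- f, - e, - d])"
proof -
  have "quot_move (vector [a, b, c], vector [d, e, f])
                  (vector [- c, - b, - a], vector [- f, - e, - d])"
    unfolding quot_move_def Let_def by simp
  then show ?thesis
    unfolding quot_equiv_def by (rule r_into_equivclp)
qed

lemma normal_form_1:
  "quot_equiv (vector [a, a, a], vector [a - 1, a, a + 1])
              (vector [0, 0, 0], vector [-1, 0, 1 :: int])"
  using quot_equiv_shift[of a a a "a - 1" a "a + 1" "- a"] by simp

lemma normal_form_2:
  "quot_equiv (vector [a, a + 1, a + 1], vector [a, a, a + 2])
              (vector [0, 1, 1], vector [0, 0, 2 :: int])"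
  using quot_equiv_shift[of a "a + 1" "a + 1" a a "a + 2" "- a"] by simp

text \<open>The mirror image of the second normal form needs the reversal move.\<close>
lemma normal_form_2_reversed:
  "quot_equiv (vector [a - 1, a - 1, a], vector [a - 2, a, a])
              (vector [0, 1, 1], vector [0, 0, 2 :: int])"
proof -
  have "quot_equiv (vector [a - 1, a - 1, a], vector [a - 2, a, a])
                   (vector [-1, -1, 0], vector [-2, 0, 0 :: int])"
    using quot_equiv_shift[of "a - 1" "a - 1" a "a - 2" a a "- a"] by simp
  moreover have "quot_equiv (vector [-1, -1, 0], vector [-2, 0, 0 :: int])
                            (vector [0, 1, 1], vector [0, 0, 2])"
    using quot_equiv_reverse[of "-1" "-1" 0 "-2" 0 0] by simp
  ultimately show ?thesis
    unfolding quot_equiv_def by (rule equivclp_trans)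
qed

lemma shapes_middle_eq_first:
  fixes p q :: "int ^ 3"
  assumes sum: "p $ 1 + p $ 2 + p $ 3 = q $ 1 + q $ 2 + q $ 3"
    and ord: "p $ 1 \<le> p $ 2" "p $ 2 \<le> p $ 3" "q $ 1 \<le> q $ 2" "q $ 2 \<le> q $ 3"
    and free: "free_action p q"
    and mid: "q $ 2 = p $ 1"
  obtains a where "p = vector [a, a, a]" "q = vector [a - 1, a, a + 1]"
        | a where "p = vector [a, a + 1, a + 1]" "q = vector [a, a, a + 2]"
proof -
  have "\<bar>p $ 2 - q $ 1\<bar> = 1"
    using free_action_gcd[OF free, of 2 1] mid by simp
  moreover have "\<bar>p $ 2 - q $ 3\<bar> = 1"
    using free_action_gcd[OF free, of 2 3] mid by simp
  ultimately consider
      "p $ 2 = p $ 1" "p $ 3 = p $ 1" "q $ 1 = p $ 1 - 1" "q $ 3 = p $ 1 + 1"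
    | "p $ 2 = p $ 1 + 1" "p $ 3 = p $ 1 + 1" "q $ 1 = p $ 1" "q $ 3 = p $ 1 + 2"
    using sum ord mid by linarith
  then show thesis
    using that mid vector_3_eta[of p] vector_3_eta[of q] by cases metis+
qed

lemma shapes_middle_eq_last:
  fixes p q :: "int ^ 3"
  assumes sum: "p $ 1 + p $ 2 + p $ 3 = q $ 1 + q $ 2 + q $ 3"
    and ord: "p $ 1 \<le> p $ 2" "p $ 2 \<le> p $ 3" "q $ 1 \<le> q $ 2" "q $ 2 \<le> q $ 3"
    and free: "free_action p q"
    and mid: "q $ 2 = p $ 3"
  obtains a where "p = vector [a, a, a]" "q = vector [a - 1, a, a + 1]"
        | a where "p = vector [a - 1, a - 1, a]" "q = vector [a - 2, a, a]"
proof -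
  have "p $ 2 - q $ 3 = - (p $ 1 - q $ 1)" and "p $ 2 - q $ 1 = - (p $ 1 - q $ 3)"
    using sum mid by linarith+
  moreover have "gcd (p $ 1 - q $ 1) (p $ 2 - q $ 3) = 1"
            and "gcd (p $ 1 - q $ 3) (p $ 2 - q $ 1) = 1"
    by (rule free_action_gcd[OF free]; simp)+
  ultimately have "gcd (p $ 1 - q $ 1) (- (p $ 1 - q $ 1)) = 1"
              and "gcd (p $ 1 - q $ 3) (- (p $ 1 - q $ 3)) = 1"
    by (simp_all only:)
  then have "\<bar>p $ 1 - q $ 1\<bar> = 1" and "\<bar>p $ 1 - q $ 3\<bar> = 1"
    by (simp_all only: gcd_neg2_int gcd_idem_int)
  then consider
      "p $ 1 = p $ 3" "p $ 2 = p $ 3" "q $ 1 = p $ 3 - 1" "q $ 3 = p $ 3 + 1"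
    | "p $ 1 = p $ 3 - 1" "p $ 2 = p $ 3 - 1" "q $ 1 = p $ 3 - 2" "q $ 3 = p $ 3"
    using sum ord mid by linarith
  then show thesis
    using that mid vector_3_eta[of p] vector_3_eta[of q] by cases metis+
qed

theorem mainTheorem3:
  fixes p q :: "int ^ 3"
  assumes "p $ 1 + p $ 2 + p $ 3 = q $ 1 + q $ 2 + q $ 3"
    and "p $ 1 \<le> p $ 2" and "p $ 2 \<le> p $ 3"
    and "q $ 1 \<le> q $ 2" and "q $ 2 \<le> q $ 3"
    and "free_action p q"
    and "q $ 2 = p $ 1 \<or> q $ 2 = p $ 3"
  shows "quot_equiv (p, q) (vector [0, 0, 0], vector [-1, 0, 1]) \<or>
         quot_equiv (p, q) (vector [0, 1, 1], vector [0, 0, 2])"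
  using assms(7)
proof
  assume "q $ 2 = p $ 1"
  then show ?thesis
    by (rule shapes_middle_eq_first[OF assms(1-6)]) (simp_all add: normal_form_1 normal_form_2)
next
  assume "q $ 2 = p $ 3"
  then show ?thesis
    by (rule shapes_middle_eq_last[OF assms(1-6)])
       (simp_all add: normal_form_1 normal_form_2_reversed)
qed

end
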